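(* Let $L$ be a finite flag complex of dimension $k$, let $M\in Z_k(L;\mathbb{Z}/2)$ be a $k$-cycle (identified with its support), and let $\Delta$ be any $k$-simplex of $M$. Then $(M,\Delta)$ satisfies the $*$-condition: for all $k$-simplices $\sigma,\tau$ of $M$ such that every vertex of $\Delta$ lies in $\sigma\cup\tau$, one has $\sigma\cap\tau\subset\Delta$.
   Context: A flag complex is a simplicial complex in which every finite set of pairwise adjacent vertices spans a simplex. *)

theory Defs
  imports Main
begin

definition simplicial_complex :: "'a set set \<Rightarrow> bool" where
  "simplicial_complex L \<longleftrightarrow>
     (\<forall>\<sigma>\<in>L. finite \<sigma> \<and> \<sigma> \<noteq> {}) \<and>
     (\<forall>\<sigma>\<in>L. \<forall>\<tau>. \<tau> \<subseteq> \<sigma> \<and> \<tau> \<noteq> {} \<longrightarrow> \<tau> \<in> L)"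

text \<open>Flag complex: every finite nonempty set of pairwise adjacent vertices spans a simplex
(for v = w the condition says v is a vertex).\<close>
definition flag_complex :: "'a set set \<Rightarrow> bool" where
  "flag_complex L \<longleftrightarrow> simplicial_complex L \<and>
     (\<forall>S. finite S \<and> S \<noteq> {} \<and> (\<forall>v\<in>S. \<forall>w\<in>S. {v, w} \<in> L) \<longrightarrow> S \<in> L)"

definition complex_dim :: "'a set set \<Rightarrow> nat \<Rightarrow> bool" where
  "complex_dim L k \<longleftrightarrow> (\<exists>\<sigma>\<in>L. card \<sigma> = k + 1) \<and> (\<forall>\<sigma>\<in>L. card \<sigma> \<le> k + 1)"

text \<open>A k-cycle with Z/2 coefficients, identified with its support: a set of k-simplices
of L whose mod-2 boundary vanishes, i.e. every (k-1)-simplex of L is a face of an even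
number of simplices of M.\<close>
definition mod2_cycle :: "'a set set \<Rightarrow> nat \<Rightarrow> 'a set set \<Rightarrow> bool" where
  "mod2_cycle L k M \<longleftrightarrow> M \<subseteq> {\<sigma>\<in>L. card \<sigma> = k + 1} \<and>
     (\<forall>\<rho>\<in>L. card \<rho> = k \<longrightarrow> even (card {\<sigma>\<in>M. \<rho> \<subseteq> \<sigma>}))"

definition star_condition :: "'a set set \<Rightarrow> 'a set \<Rightarrow> bool" where
  "star_condition M \<Delta> \<longleftrightarrow>
     (\<forall>\<sigma>\<in>M. \<forall>\<tau>\<in>M. \<Delta> \<subseteq> \<sigma> \<union> \<tau> \<longrightarrow> \<sigma> \<inter> \<tau> \<subseteq> \<Delta>)"

end

theory Submission
  imports Defs
begin

text \<open>
  Let \<sigma>, \<tau> be top simplices of M with \<Delta> \<subseteq> \<sigma> \<union> \<tau>, and suppose some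
  v \<in> \<sigma> \<inter> \<tau> lies outside \<Delta>.  Every vertex w of \<Delta> lies in \<sigma> or in \<tau>, and so does v,
  hence v and w share a simplex and are adjacent.  By flagness, \<Delta> \<union> {v} is then a
  simplex of L with k + 2 vertices, contradicting dim L = k.

  So the star-condition holds for every set M of k-simplices of a flag complex of
  dimension at most k; the cycle condition only contributes that M consists of
  k-simplices of L.
\<close>

lemma simplex_finite:
  assumes "simplicial_complex L" and "\<rho> \<in> L"
  shows "finite \<rho>"
  using assms unfolding simplicial_complex_def by simp

lemma edge_of_common_simplex:
  assumes "simplicial_complex L" and "\<rho> \<in> L" and "a \<in> \<rho>" and "b \<in> \<rho>"
  shows "{a, b} \<in> L"
proof -
  have "{a, b} \<subseteq> \<rho>" using assms(3,4) by simp
  then show ?thesis using assms(1,2) unfolding simplicial_complex_def by blast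
qed

lemma flag_insert_adjacent_vertex:
  assumes flag: "flag_complex L" and \<Delta>: "\<Delta> \<in> L"
    and vv: "{v} \<in> L" and adj: "\<And>w. w \<in> \<Delta> \<Longrightarrow> {v, w} \<in> L"
  shows "insert v \<Delta> \<in> L"
proof -
  have sc: "simplicial_complex L" and
    flag_rule: "\<And>S. finite S \<Longrightarrow> S \<noteq> {} \<Longrightarrow> (\<forall>a\<in>S. \<forall>b\<in>S. {a, b} \<in> L) \<Longrightarrow> S \<in> L"
    using flag unfolding flag_complex_def by blast+
  have "finite \<Delta>" using simplex_finite[OF sc \<Delta>] .
  moreover have "\<forall>a\<in>insert v \<Delta>. \<forall>b\<in>insert v \<Delta>. {a, b} \<in> L"
  proof (intro ballI)
    fix a b assume a: "a \<in> insert v \<Delta>" and b: "b \<in> insert v \<Delta>"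
    have edge_\<Delta>: "{x, y} \<in> L" if "x \<in> \<Delta>" "y \<in> \<Delta>" for x y
      using edge_of_common_simplex[OF sc \<Delta> that] .
    show "{a, b} \<in> L"
    proof (cases "a = v"; cases "b = v")
      assume "a = v" "b = v" then show ?thesis using vv by simp
    next
      assume "a = v" "b \<noteq> v" then show ?thesis using adj b by simp
    next
      assume "a \<noteq> v" "b = v"
      then show ?thesis using adj[of a] a by (simp add: insert_commute)
    next
      assume "a \<noteq> v" "b \<noteq> v" then show ?thesis using edge_\<Delta> a b by simp
    qed
  qed
  ultimately show ?thesis by (intro flag_rule) simp_all
qed

lemma star_condition_flag_top_simplices:
  assumes flag: "flag_complex L"
    and dim: "\<And>\<rho>. \<rho> \<in> L \<Longrightarrow> card \<rho> \<le> k + 1"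
    and top: "\<And>\<rho>. \<rho> \<in> M \<Longrightarrow> \<rho> \<in> L \<and> card \<rho> = k + 1"
    and \<Delta>: "\<Delta> \<in> M"
  shows "star_condition M \<Delta>"
  unfolding star_condition_def
proof (intro ballI impI subsetI)
  fix \<sigma> \<tau> v
  assume \<sigma>: "\<sigma> \<in> M" and \<tau>: "\<tau> \<in> M" and cover: "\<Delta> \<subseteq> \<sigma> \<union> \<tau>" and v: "v \<in> \<sigma> \<inter> \<tau>"
  have sc: "simplicial_complex L" using flag unfolding flag_complex_def by blast
  have \<sigma>L: "\<sigma> \<in> L" and \<tau>L: "\<tau> \<in> L" and \<Delta>L: "\<Delta> \<in> L" using top \<sigma> \<tau> \<Delta> by blast+
  show "v \<in> \<Delta>"
  proof (rule ccontr)
    assume v_out: "v \<notin> \<Delta>"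
    have "{v} \<in> L" using edge_of_common_simplex[OF sc \<sigma>L, of v v] v by simp
    moreover have "{v, w} \<in> L" if "w \<in> \<Delta>" for w
    proof -
      have "w \<in> \<sigma> \<or> w \<in> \<tau>" using that cover by blast
      then show ?thesis
        using v edge_of_common_simplex[OF sc \<sigma>L, of v w] edge_of_common_simplex[OF sc \<tau>L, of v w]
        by blast
    qed
    ultimately have "insert v \<Delta> \<in> L"
      by (rule flag_insert_adjacent_vertex[OF flag \<Delta>L])
    hence "card (insert v \<Delta>) \<le> k + 1" using dim by blast
    moreover have "card (insert v \<Delta>) = k + 2"
      using simplex_finite[OF sc \<Delta>L] v_out top[OF \<Delta>] by simp
    ultimately show False by simp
  qed
qed

theorem mainTheorem12:
  fixes L M :: "'a set set" and \<Delta> :: "'a set" and k :: nat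
  assumes "finite L" and "flag_complex L" and "complex_dim L k"
    and "mod2_cycle L k M" and "\<Delta> \<in> M"
  shows "star_condition M \<Delta>"
proof (rule star_condition_flag_top_simplices[OF assms(2) _ _ assms(5)])
  show "card \<rho> \<le> k + 1" if "\<rho> \<in> L" for \<rho>
    using assms(3) that unfolding complex_dim_def by blast
  show "\<rho> \<in> L \<and> card \<rho> = k + 1" if "\<rho> \<in> M" for \<rho>
    using assms(4) that unfolding mod2_cycle_def by blast
qed

end
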